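(* Let $\bar f:[a,b]\to\mathbb{R}_\mathcal{I}$ be continuous. If $\bar F:[a,b]\to\mathbb{R}_\mathcal{I}$ is a primitive of $\bar f$ on $[a,b]$, i.e. $\bar F'(x)=\bar f(x)$ for all $x\in[a,b]$, then $$\bar F(b)-\bar F(a)=(IR)\int_a^b\bar f(t)\,dt.$$
   Context: An interval number is a closed interval $\bar a=[a_l,a_r]$ with $a_l<a_r$ real; $\mathbb{R}_\mathcal{I}$ is the set of interval numbers. Write $a_c=(a_l+a_r)/2$, $a_w=(a_r-a_l)/2>0$, $\bar a=\langle a_c;a_w\rangle=[a_c-a_w,a_c+a_w]$. Operations: $\bar a+\bar b=\langle a_c+b_c;a_wb_w\rangle$, $\bar a-\bar b=\langle a_c-b_c;a_w/b_w\rangle$, $k\bar a=\langle ka_c;a_w^k\rangle$ for real $k$; for real $h\ne0$, $\bar c/h=\langle c_c/h;c_w^{1/h}\rangle$. Distance $d(\bar a,\bar b)=\sqrt{(a_c-b_c)^2+(\ln a_w-\ln b_w)^2}$; continuity and limits w.r.t. $d$. Derivative: $\bar F'(x)=\lim_{h\to0}\frac{\bar F(x+h)-\bar F(x)}{h}$. Interval Riemann integral: $\bar A=(IR)\int_a^b\bar f$ if for every $\varepsilon>0$ there is $\delta>0$ such that for every partition $a=t_0<\dots<t_n=b$ with mesh $<\delta$ and tags $\xi_i\in[t_{i-1},t_i]$, $d(\sum_i(t_i-t_{i-1})\bar f(\xi_i),\bar A)<\varepsilon$. *)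

theory Defs
  imports Complex_Main
begin

typedef ival = "{(l::real, r::real). l < r}" morphisms ival_rep Ival
  by (rule exI[of _ "(0,1)"]) auto

definition ic :: "ival \<Rightarrow> real" where
  "ic a = (fst (ival_rep a) + snd (ival_rep a)) / 2"

definition iw :: "ival \<Rightarrow> real" where
  "iw a = (snd (ival_rep a) - fst (ival_rep a)) / 2"

text \<open>The interval number with centre c and width w (meaningful for w > 0).\<close>
definition mk_ival :: "real \<Rightarrow> real \<Rightarrow> ival" where
  "mk_ival c w = Ival (c - w, c + w)"

definition iadd :: "ival \<Rightarrow> ival \<Rightarrow> ival" where
  "iadd a b = mk_ival (ic a + ic b) (iw a * iw b)"

definition isub :: "ival \<Rightarrow> ival \<Rightarrow> ival" where
  "isub a b = mk_ival (ic a - ic b) (iw a / iw b)"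

definition iscale :: "real \<Rightarrow> ival \<Rightarrow> ival" where
  "iscale k a = mk_ival (k * ic a) (iw a powr k)"

definition idiv :: "ival \<Rightarrow> real \<Rightarrow> ival" where
  "idiv c h = mk_ival (ic c / h) (iw c powr (1 / h))"

definition idist :: "ival \<Rightarrow> ival \<Rightarrow> real" where
  "idist a b = sqrt ((ic a - ic b)^2 + (ln (iw a) - ln (iw b))^2)"

text \<open>Finite interval sums g 0 + ... + g (n-1); the empty sum is the neutral
  element <0;1> = [-1,1] of iadd.\<close>
primrec isum :: "(nat \<Rightarrow> ival) \<Rightarrow> nat \<Rightarrow> ival" where
  "isum g 0 = mk_ival 0 1"
| "isum g (Suc n) = iadd (isum g n) (g n)"

definition icont_on :: "real \<Rightarrow> real \<Rightarrow> (real \<Rightarrow> ival) \<Rightarrow> bool" where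
  "icont_on a b f \<longleftrightarrow> (\<forall>x\<in>{a..b}. \<forall>\<epsilon>>0. \<exists>\<delta>>0. \<forall>y\<in>{a..b}.
      \<bar>y - x\<bar> < \<delta> \<longrightarrow> idist (f y) (f x) < \<epsilon>)"

definition ihas_deriv :: "real \<Rightarrow> real \<Rightarrow> (real \<Rightarrow> ival) \<Rightarrow> ival \<Rightarrow> real \<Rightarrow> bool" where
  "ihas_deriv a b F D x \<longleftrightarrow> (\<forall>\<epsilon>>0. \<exists>\<delta>>0. \<forall>h. h \<noteq> 0 \<and> \<bar>h\<bar> < \<delta> \<and> x + h \<in> {a..b} \<longrightarrow>
      idist (idiv (isub (F (x + h)) (F x)) h) D < \<epsilon>)"

definition has_IR_integral :: "(real \<Rightarrow> ival) \<Rightarrow> real \<Rightarrow> real \<Rightarrow> ival \<Rightarrow> bool" where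
  "has_IR_integral f a b A \<longleftrightarrow> (\<forall>\<epsilon>>0. \<exists>\<delta>>0. \<forall>(n::nat) (t::nat \<Rightarrow> real) (\<xi>::nat \<Rightarrow> real).
      (n \<ge> 1 \<and> t 0 = a \<and> t n = b \<and> (\<forall>i<n. t i < t (Suc i)) \<and> (\<forall>i<n. t (Suc i) - t i < \<delta>)
       \<and> (\<forall>i<n. t i \<le> \<xi> i \<and> \<xi> i \<le> t (Suc i)))
      \<longrightarrow> idist (isum (\<lambda>i. iscale (t (Suc i) - t i) (f (\<xi> i))) n) A < \<epsilon>)"

end

theory Submission
  imports Defs "HOL-Analysis.Analysis"
begin

(*
  The map a \<mapsto> (a_c, ln a_w) identifies interval numbers with points of the plane: it turns
  the interval operations +, -, k\<cdot> and /h into the vector operations of R^2 and the distance d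
  into the Euclidean distance. Under this identification F' = f is an ordinary derivative of a
  plane-valued function with continuous derivative, interval Riemann sums are ordinary Riemann
  sums, and the theorem becomes the fundamental theorem of calculus for such functions. The latter
  follows from the mean value inequality on each subinterval of a partition, combined with uniform
  continuity of the derivative on [a,b].
*)

lemma has_vector_derivative_withinI_slope:
  fixes G :: "real \<Rightarrow> 'a::real_normed_vector"
  assumes slope: "\<And>e. e > 0 \<Longrightarrow> \<exists>d>0. \<forall>h. h \<noteq> 0 \<and> \<bar>h\<bar> < d \<and> x + h \<in> S \<longrightarrow>
      dist ((G (x + h) - G x) /\<^sub>R h) D < e"
  shows "(G has_vector_derivative D) (at x within S)"
  unfolding has_vector_derivative_def has_derivative_within_alt
proof (intro conjI allI impI bounded_linear_scaleR_left)
  fix e :: real assume "e > 0"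
  then obtain d where "d > 0" and d: "\<And>h. h \<noteq> 0 \<Longrightarrow> \<bar>h\<bar> < d \<Longrightarrow> x + h \<in> S \<Longrightarrow>
      dist ((G (x + h) - G x) /\<^sub>R h) D < e"
    using slope by blast
  have "norm (G y - G x - (y - x) *\<^sub>R D) \<le> e * norm (y - x)"
    if "y \<in> S" "norm (y - x) < d" for y
  proof (cases "y = x")
    case False
    then have "dist ((G y - G x) /\<^sub>R (y - x)) D < e"
      using d[of "y - x"] that by simp
    moreover have "G y - G x - (y - x) *\<^sub>R D = (y - x) *\<^sub>R ((G y - G x) /\<^sub>R (y - x) - D)"
      using False by (simp add: scaleR_diff_right)
    ultimately show ?thesis
      by (simp add: dist_norm mult.commute[of e] mult_left_mono)
  qed simp
  then show "\<exists>d>0. \<forall>y\<in>S. norm (y - x) < d \<longrightarrow> norm (G y - G x - (y - x) *\<^sub>R D) \<le> e * norm (y - x)"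
    using \<open>d > 0\<close> by blast
qed

lemma increment_linearization_bound:
  fixes G g :: "real \<Rightarrow> 'a::real_normed_vector"
  assumes "u \<le> v" and "\<xi> \<in> {u..v}"
    and deriv: "\<And>x. x \<in> {u..v} \<Longrightarrow> (G has_vector_derivative g x) (at x within {u..v})"
    and close: "\<And>x. x \<in> {u..v} \<Longrightarrow> norm (g x - g \<xi>) \<le> \<epsilon>"
  shows "norm (G v - G u - (v - u) *\<^sub>R g \<xi>) \<le> (v - u) * \<epsilon>"
proof -
  have "norm (G v - G u - (v - u) *\<^sub>R g \<xi>) \<le> norm (v - u) * \<epsilon>"
  proof (rule differentiable_bound_linearization[where f' = "\<lambda>x h. h *\<^sub>R g x"])
    show "u + s *\<^sub>R (v - u) \<in> {u..v}" if "s \<in> {0..1}" for s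
      using that \<open>u \<le> v\<close> mult_left_le_one_le[of "v - u" s] by auto
    show "(G has_derivative (\<lambda>h. h *\<^sub>R g x)) (at x within {u..v})" if "x \<in> {u..v}" for x
      using deriv[OF that] by (simp add: has_vector_derivative_def)
    show "onorm ((\<lambda>h. h *\<^sub>R g x) - (\<lambda>h. h *\<^sub>R g \<xi>)) \<le> \<epsilon>" if "x \<in> {u..v}" for x
      using close[OF that] onorm_scaleR_left[OF bounded_linear_ident, of "g x - g \<xi>"]
      by (simp add: fun_diff_def scaleR_diff_right[symmetric] onorm_id)
  qed fact
  then show ?thesis
    using \<open>u \<le> v\<close> by simp
qed

definition fine_tagged_partition ::
    "real \<Rightarrow> real \<Rightarrow> real \<Rightarrow> nat \<Rightarrow> (nat \<Rightarrow> real) \<Rightarrow> (nat \<Rightarrow> real) \<Rightarrow> bool" where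
  "fine_tagged_partition a b \<delta> n t \<xi> \<longleftrightarrow> n \<ge> 1 \<and> t 0 = a \<and> t n = b \<and> (\<forall>i<n. t i < t (Suc i))
     \<and> (\<forall>i<n. t (Suc i) - t i < \<delta>) \<and> (\<forall>i<n. t i \<le> \<xi> i \<and> \<xi> i \<le> t (Suc i))"

lemma fine_tagged_partition_subinterval:
  assumes "fine_tagged_partition a b \<delta> n t \<xi>" and "i < n"
  shows "{t i..t (Suc i)} \<subseteq> {a..b}"
proof -
  have step: "t m \<le> t (Suc m)" if "m \<in> {..<n}" for m
    using assms(1) that by (simp add: fine_tagged_partition_def less_imp_le)
  have "t 0 \<le> t i" "t (Suc i) \<le> t n"
    using assms(2) by (auto intro!: lift_Suc_mono_le_ivl[where f = t and N = "{..<n}", OF step])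
  then show ?thesis
    using assms(1) by (auto simp: fine_tagged_partition_def)
qed

lemma riemann_sum_approximates_increment:
  fixes G g :: "real \<Rightarrow> 'a::real_normed_vector"
  assumes cont: "continuous_on {a..b} g"
    and deriv: "\<And>x. x \<in> {a..b} \<Longrightarrow> (G has_vector_derivative g x) (at x within {a..b})"
    and "\<epsilon> > 0"
  obtains \<delta> where "\<delta> > 0" and "\<And>n t \<xi>. fine_tagged_partition a b \<delta> n t \<xi> \<Longrightarrow>
    norm ((\<Sum>i<n. (t (Suc i) - t i) *\<^sub>R g (\<xi> i)) - (G b - G a)) \<le> \<epsilon> * (b - a)"
proof -
  obtain \<delta> where "\<delta> > 0" and \<delta>: "\<forall>y\<in>{a..b}. \<forall>x\<in>{a..b}. dist x y < \<delta> \<longrightarrow> dist (g x) (g y) < \<epsilon>"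
    using compact_uniformly_continuous[OF cont compact_Icc] \<open>\<epsilon> > 0\<close>
    unfolding uniformly_continuous_on_def by blast
  have "norm ((\<Sum>i<n. (t (Suc i) - t i) *\<^sub>R g (\<xi> i)) - (G b - G a)) \<le> \<epsilon> * (b - a)"
    if P: "fine_tagged_partition a b \<delta> n t \<xi>" for n t \<xi>
  proof -
    have piece: "norm (G (t (Suc i)) - G (t i) - (t (Suc i) - t i) *\<^sub>R g (\<xi> i)) \<le> (t (Suc i) - t i) * \<epsilon>"
      if "i < n" for i
    proof (rule increment_linearization_bound)
      have sub: "{t i..t (Suc i)} \<subseteq> {a..b}"
        using fine_tagged_partition_subinterval[OF P \<open>i < n\<close>] .
      show "t i \<le> t (Suc i)" and \<xi>: "\<xi> i \<in> {t i..t (Suc i)}"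
        using P \<open>i < n\<close> by (auto simp: fine_tagged_partition_def)
      show "(G has_vector_derivative g x) (at x within {t i..t (Suc i)})"
        if "x \<in> {t i..t (Suc i)}" for x
        using has_vector_derivative_within_subset[OF deriv sub] sub that by blast
      show "norm (g x - g (\<xi> i)) \<le> \<epsilon>" if "x \<in> {t i..t (Suc i)}" for x
      proof -
        have "t (Suc i) - t i < \<delta>"
          using P \<open>i < n\<close> by (simp add: fine_tagged_partition_def)
        then have "dist x (\<xi> i) < \<delta>"
          using that \<xi> by (auto simp: dist_real_def abs_less_iff)
        then show ?thesis
          using \<delta> sub that \<xi> by (force simp: dist_norm)
      qed
    qed
    have "norm ((\<Sum>i<n. (t (Suc i) - t i) *\<^sub>R g (\<xi> i)) - (G b - G a))
        = norm (\<Sum>i<n. G (t (Suc i)) - G (t i) - (t (Suc i) - t i) *\<^sub>R g (\<xi> i))"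
      using P sum_lessThan_telescope[of "G \<circ> t" n]
      by (simp add: fine_tagged_partition_def sum_subtractf norm_minus_commute)
    also have "\<dots> \<le> (\<Sum>i<n. (t (Suc i) - t i) * \<epsilon>)"
      by (intro sum_norm_le piece) simp
    also have "\<dots> = \<epsilon> * (b - a)"
      using P sum_lessThan_telescope[of t n]
      by (simp add: fine_tagged_partition_def mult.commute[of _ \<epsilon>] flip: sum_distrib_left)
    finally show ?thesis .
  qed
  with \<open>\<delta> > 0\<close> show thesis
    using that by blast
qed

definition ival_vec :: "ival \<Rightarrow> real \<times> real" where
  "ival_vec a = (ic a, ln (iw a))"

lemma iw_pos: "iw a > 0"
  using ival_rep[of a] by (auto simp: iw_def split: prod.splits)

lemma ival_vec_mk_ival: "w > 0 \<Longrightarrow> ival_vec (mk_ival c w) = (c, ln w)"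
  by (simp add: ival_vec_def mk_ival_def ic_def iw_def Ival_inverse)

lemma ival_vec_iadd: "ival_vec (iadd a b) = ival_vec a + ival_vec b"
  using iw_pos[of a] iw_pos[of b]
  by (simp add: iadd_def ival_vec_mk_ival) (simp add: ival_vec_def ln_mult)

lemma ival_vec_isub: "ival_vec (isub a b) = ival_vec a - ival_vec b"
  using iw_pos[of a] iw_pos[of b]
  by (simp add: isub_def ival_vec_mk_ival) (simp add: ival_vec_def ln_div)

lemma ival_vec_iscale: "ival_vec (iscale k a) = k *\<^sub>R ival_vec a"
  using iw_pos[of a] by (simp add: iscale_def ival_vec_mk_ival) (simp add: ival_vec_def ln_powr)

lemma ival_vec_idiv: "ival_vec (idiv a h) = ival_vec a /\<^sub>R h"
  using iw_pos[of a]
  by (simp add: idiv_def ival_vec_mk_ival) (simp add: ival_vec_def ln_powr divide_inverse)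

lemma ival_vec_isum: "ival_vec (isum g n) = (\<Sum>i<n. ival_vec (g i))"
  by (induction n) (simp_all add: ival_vec_mk_ival ival_vec_iadd zero_prod_def)

lemma idist_eq_dist: "idist a b = dist (ival_vec a) (ival_vec b)"
  by (simp add: idist_def ival_vec_def dist_Pair_Pair dist_real_def)

lemma continuous_on_ival_vec_comp: "icont_on a b f \<Longrightarrow> continuous_on {a..b} (ival_vec \<circ> f)"
  unfolding icont_on_def continuous_on_iff by (simp add: idist_eq_dist dist_real_def)

lemma ihas_deriv_imp_has_vector_derivative:
  assumes "ihas_deriv a b F D x"
  shows "((ival_vec \<circ> F) has_vector_derivative ival_vec D) (at x within {a..b})"
  using assms unfolding ihas_deriv_def
  by (intro has_vector_derivative_withinI_slope)
    (simp add: idist_eq_dist ival_vec_idiv ival_vec_isub)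

lemma has_IR_integral_iff_fine_tagged_partition:
  "has_IR_integral f a b A \<longleftrightarrow> (\<forall>\<epsilon>>0. \<exists>\<delta>>0. \<forall>n t \<xi>. fine_tagged_partition a b \<delta> n t \<xi> \<longrightarrow>
     idist (isum (\<lambda>i. iscale (t (Suc i) - t i) (f (\<xi> i))) n) A < \<epsilon>)"
  unfolding has_IR_integral_def fine_tagged_partition_def ..

theorem theorem5p7:
  fixes f F :: "real \<Rightarrow> ival" and a b :: real
  assumes "a < b"
    and "icont_on a b f"
    and "\<forall>x\<in>{a..b}. ihas_deriv a b F (f x) x"
  shows "has_IR_integral f a b (isub (F b) (F a))"
  unfolding has_IR_integral_iff_fine_tagged_partition
proof (intro allI impI)
  fix e :: real assume "e > 0"
  have cont: "continuous_on {a..b} (ival_vec \<circ> f)"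
    using assms(2) by (rule continuous_on_ival_vec_comp)
  have deriv: "((ival_vec \<circ> F) has_vector_derivative (ival_vec \<circ> f) x) (at x within {a..b})"
    if "x \<in> {a..b}" for x
    using assms(3) that by (simp add: ihas_deriv_imp_has_vector_derivative)
  have "e / 2 / (b - a) > 0"
    using \<open>e > 0\<close> \<open>a < b\<close> by simp
  then obtain \<delta> where "\<delta> > 0" and approx: "\<And>n t \<xi>. fine_tagged_partition a b \<delta> n t \<xi> \<Longrightarrow>
      norm ((\<Sum>i<n. (t (Suc i) - t i) *\<^sub>R (ival_vec \<circ> f) (\<xi> i)) - ((ival_vec \<circ> F) b - (ival_vec \<circ> F) a))
        \<le> e / 2 / (b - a) * (b - a)"
    using riemann_sum_approximates_increment[OF cont deriv] by blast
  have "e / 2 / (b - a) * (b - a) < e"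
    using \<open>e > 0\<close> \<open>a < b\<close> by (simp add: field_simps)
  then have "idist (isum (\<lambda>i. iscale (t (Suc i) - t i) (f (\<xi> i))) n) (isub (F b) (F a)) < e"
    if "fine_tagged_partition a b \<delta> n t \<xi>" for n t \<xi>
    using approx[OF that]
    by (simp add: idist_eq_dist dist_norm ival_vec_isum ival_vec_iscale ival_vec_isub)
  with \<open>\<delta> > 0\<close> show "\<exists>\<delta>>0. \<forall>n t \<xi>. fine_tagged_partition a b \<delta> n t \<xi> \<longrightarrow>
      idist (isum (\<lambda>i. iscale (t (Suc i) - t i) (f (\<xi> i))) n) (isub (F b) (F a)) < e"
    by blast
qed

end
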